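(* Let $\alpha\in(0,\pi/2)$. Then problem $(\mathcal{P}_\alpha)$ admits a minimizer: there exist $L>0$ and $\theta\in\mathcal{M}_{\alpha,L}$ such that $\frac12\int_0^L\theta'(s)^2\,ds\le \frac12\int_0^{\tilde L}\tilde\theta'(s)^2\,ds$ for every $\tilde L>0$ and every $\tilde\theta\in\mathcal{M}_{\alpha,\tilde L}$.
   Context: For $\alpha\in(0,\pi/2]$ and $L>0$, let $\mathcal{M}_{\alpha,L}$ be the set of $\theta\in H^1(0,L)$ with $\theta'\ge 0$ a.e., $\theta(0)=0$, $\theta(L)=2\alpha$, $\int_0^L\cos\theta(u)\,du=\sin2\alpha$ and $\int_0^L\sin\theta(u)\,du=1-\cos2\alpha$. Such a $\theta$ is the tangent angle (with the horizontal axis) of the convex arc parametrized by arc length $\gamma(s)=(x(s),y(s))$, $x(s)=\int_0^s\cos\theta$, $y(s)=-1+\int_0^s\sin\theta$, which joins $A=(0,-1)$ with tangent $(1,0)$ to $B=(\sin2\alpha,-\cos2\alpha)$ with tangent $(\cos2\alpha,\sin2\alpha)$; its length $L$ is free. Problem $(\mathcal{P}_\alpha)$ is to minimize the elastic energy $\frac12\int_0^L\theta'(s)^2\,ds$ over all $L>0$ and $\theta\in\mathcal{M}_{\alpha,L}$. *)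

theory Defs
  imports "HOL-Analysis.Analysis"
begin

text \<open>H^1(0,L) functions: theta is absolutely continuous on [0,L] with weak derivative g
  in L^2(0,L), i.e. theta s = theta 0 + int_0^s g for all s in [0,L].  The weak derivative g
  is unique almost everywhere, so the energy (1/2) int_0^L g^2 only depends on theta.\<close>
definition H1_with_deriv :: "real \<Rightarrow> (real \<Rightarrow> real) \<Rightarrow> (real \<Rightarrow> real) \<Rightarrow> bool" where
  "H1_with_deriv L \<theta> g \<longleftrightarrow>
     set_integrable lborel {0..L} g \<and>
     set_integrable lborel {0..L} (\<lambda>s. (g s)\<^sup>2) \<and>
     (\<forall>s\<in>{0..L}. \<theta> s = \<theta> 0 + (LINT u:{0..s}|lborel. g u))"

definition admissible :: "real \<Rightarrow> real \<Rightarrow> (real \<Rightarrow> real) \<Rightarrow> (real \<Rightarrow> real) \<Rightarrow> bool" where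
  "admissible \<alpha> L \<theta> g \<longleftrightarrow>
     H1_with_deriv L \<theta> g \<and>
     (AE s in lborel. s \<in> {0..L} \<longrightarrow> g s \<ge> 0) \<and>
     \<theta> 0 = 0 \<and> \<theta> L = 2 * \<alpha> \<and>
     (LINT u:{0..L}|lborel. cos (\<theta> u)) = sin (2 * \<alpha>) \<and>
     (LINT u:{0..L}|lborel. sin (\<theta> u)) = 1 - cos (2 * \<alpha>)"

definition energy :: "real \<Rightarrow> (real \<Rightarrow> real) \<Rightarrow> real" where
  "energy L g = (1/2) * (LINT s:{0..L}|lborel. (g s)\<^sup>2)"

end

theory Submission
  imports Defs
begin

(*
  Write w(\<phi>) = sqrt (cos (\<phi> - \<alpha>)), J = \<integral> w over [0, 2\<alpha>] and k = J / (2 sin \<alpha>).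
  For admissible \<theta> with weak derivative g, the chain rule for absolutely continuous functions
  gives \<integral> w(\<theta>) g = J over [0, L], and the closing conditions rotated by -\<alpha> say
  \<integral> w(\<theta>)\<^sup>2 = \<integral> cos (\<theta> - \<alpha>) = 2 sin \<alpha>. Expanding 0 \<le> \<integral> (g - k w(\<theta>))\<^sup>2 therefore gives
  \<integral> g\<^sup>2 \<ge> 2 k J - 2 k\<^sup>2 sin \<alpha> = J\<^sup>2 / (2 sin \<alpha>), with equality iff \<theta>' = k w(\<theta>).
  This separable equation is solved by inverting \<phi> \<mapsto> \<integral> 1 / (k w) over [0, \<phi>]; the solution
  satisfies the rotated closing conditions because \<integral> w(\<theta>) \<theta>' = J and
  (w \<circ> \<theta>)' = -(k/2) sin (\<theta> - \<alpha>) with w(0) = w(2\<alpha>).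
*)

section \<open>A chain rule for absolutely continuous functions\<close>

(* Walking from a to b in n steps of equal V-increment accumulates an error of at most
   C (V b - V a)\<^sup>2 / n. *)
lemma eq_if_increments_bounded_by_square:
  fixes D V :: "real \<Rightarrow> real"
  assumes "a \<le> b" and V_cont: "continuous_on {a..b} V" and V_mono: "mono_on {a..b} V"
    and D_incr: "\<And>t t'. a \<le> t \<Longrightarrow> t \<le> t' \<Longrightarrow> t' \<le> b \<Longrightarrow> \<bar>D t' - D t\<bar> \<le> C * (V t' - V t)\<^sup>2"
  shows "D b = D a"
proof -
  define \<Delta> where "\<Delta> = V b - V a"
  have "0 \<le> \<Delta>" using mono_onD[OF V_mono] \<open>a \<le> b\<close> by (simp add: \<Delta>_def)
  have walk: "\<exists>t\<in>{a..b}. V t = V a + j * \<Delta> / n \<and> \<bar>D t - D a\<bar> \<le> C * j * (\<Delta> / n)\<^sup>2"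
    if "0 < n" "j \<le> n" for n j :: nat
    using \<open>j \<le> n\<close>
  proof (induction j)
    case 0
    show ?case using \<open>a \<le> b\<close> by auto
  next
    case (Suc j)
    then obtain t where t: "t \<in> {a..b}" "V t = V a + j * \<Delta> / n"
      and err: "\<bar>D t - D a\<bar> \<le> C * j * (\<Delta> / n)\<^sup>2"
      by auto
    have "V t \<le> V a + Suc j * \<Delta> / n"
      using t(2) \<open>0 \<le> \<Delta>\<close> \<open>0 < n\<close> by (simp add: field_simps)
    moreover have "Suc j * \<Delta> \<le> n * \<Delta>"
      using Suc.prems \<open>0 \<le> \<Delta>\<close> by (intro mult_right_mono) auto
    then have "V a + Suc j * \<Delta> / n \<le> V b"
      using \<open>0 < n\<close> by (simp add: \<Delta>_def field_simps)
    moreover have "continuous_on {t..b} V"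
      using t(1) by (auto intro: continuous_on_subset[OF V_cont])
    ultimately obtain t' where t': "t \<le> t'" "t' \<le> b" "V t' = V a + Suc j * \<Delta> / n"
      using IVT'[of V t _ b] t(1) by auto
    have "V t' - V t = \<Delta> / n"
      using t(2) t'(3) by (simp add: add_divide_distrib algebra_simps)
    then have "\<bar>D t' - D t\<bar> \<le> C * (\<Delta> / n)\<^sup>2"
      using D_incr[of t t'] t(1) t' by simp
    then have "\<bar>D t' - D a\<bar> \<le> C * Suc j * (\<Delta> / n)\<^sup>2"
      using err by (simp add: algebra_simps)
    then show ?case using t(1) t' by auto
  qed
  have "\<bar>D b - D a\<bar> \<le> C * \<Delta>\<^sup>2 / n" if "0 < n" for n :: nat
  proof -
    obtain t where t: "t \<in> {a..b}" "V t = V b" and err: "\<bar>D t - D a\<bar> \<le> C * n * (\<Delta> / n)\<^sup>2"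
      using walk[OF \<open>0 < n\<close> order_refl] \<open>0 < n\<close> by (auto simp: \<Delta>_def)
    have "\<bar>D b - D t\<bar> \<le> 0"
      using D_incr[of t b] t by simp
    then have "\<bar>D b - D a\<bar> \<le> C * n * (\<Delta> / n)\<^sup>2"
      using err by linarith
    also have "\<dots> = C * \<Delta>\<^sup>2 / n"
      using \<open>0 < n\<close> by (simp add: power2_eq_square field_simps)
    finally show ?thesis .
  qed
  then have "\<bar>D b - D a\<bar> \<le> 0"
    by (intro LIMSEQ_le_const[OF lim_const_over_n[of "C * \<Delta>\<^sup>2"]]) (auto intro!: exI[of _ 1])
  then show ?thesis by simp
qed

lemma lipschitz_derivative_remainder_bound:
  fixes Q W :: "real \<Rightarrow> real"
  assumes W_lip: "l-lipschitz_on {m..M} W" and Q_cont: "continuous_on {m..M} Q"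
    and Q_deriv: "\<And>x. x \<in> {m<..<M} \<Longrightarrow> (Q has_real_derivative W x) (at x)"
    and x: "x \<in> {m..M}" and y: "y \<in> {m..M}"
  shows "\<bar>Q y - Q x - W x * (y - x)\<bar> \<le> l * (y - x)\<^sup>2"
proof -
  have mvt: "\<exists>z\<in>{p..q}. Q q - Q p = (q - p) * W z"
    if "p \<in> {m..M}" "q \<in> {m..M}" "p \<le> q" for p q
  proof (cases "p = q")
    case False
    then have "p < q" using \<open>p \<le> q\<close> by simp
    moreover have "continuous_on {p..q} Q"
      using that by (auto intro: continuous_on_subset[OF Q_cont])
    moreover have W_deriv: "(Q has_real_derivative W z) (at z)" if "p < z" "z < q" for z
      using Q_deriv \<open>p \<in> {m..M}\<close> \<open>q \<in> {m..M}\<close> that by auto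
    ultimately obtain d z where z: "p < z" "z < q" and "(Q has_real_derivative d) (at z)"
      and "Q q - Q p = (q - p) * d"
      using MVT[of p q Q] real_differentiable_def by meson
    moreover have "d = W z"
      using DERIV_unique \<open>(Q has_real_derivative d) (at z)\<close> W_deriv z by blast
    ultimately show ?thesis by auto
  qed auto
  obtain z where z: "z \<in> {m..M}" "\<bar>z - x\<bar> \<le> \<bar>y - x\<bar>" and Q_diff: "Q y - Q x = (y - x) * W z"
  proof (cases "x \<le> y")
    case True
    then obtain z where "z \<in> {x..y}" "Q y - Q x = (y - x) * W z"
      using mvt[OF x y] by auto
    then show ?thesis using that[of z] x y by auto
  next
    case False
    then obtain z where "z \<in> {y..x}" "Q x - Q y = (x - y) * W z"
      using mvt[OF y x] by auto
    then show ?thesis using that[of z] x y by (auto simp: algebra_simps)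
  qed
  have "\<bar>Q y - Q x - W x * (y - x)\<bar> = \<bar>y - x\<bar> * \<bar>W z - W x\<bar>"
    by (simp add: Q_diff algebra_simps flip: abs_mult)
  also have "\<dots> \<le> \<bar>y - x\<bar> * (l * \<bar>z - x\<bar>)"
    using lipschitz_onD[OF W_lip z(1) x] by (simp add: dist_real_def mult_left_mono)
  also have "\<dots> \<le> \<bar>y - x\<bar> * (l * \<bar>y - x\<bar>)"
    using z(2) lipschitz_on_nonneg[OF W_lip] by (simp add: mult_left_mono)
  finally show ?thesis by (simp add: power2_eq_square algebra_simps)
qed

lemma absolutely_integrable_continuous_mult:
  fixes f g :: "real \<Rightarrow> real"
  assumes "continuous_on {a..b} f" and "g absolutely_integrable_on {a..b}"
  shows "(\<lambda>s. f s * g s) absolutely_integrable_on {a..b}"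
proof (rule absolutely_integrable_bounded_measurable_product_real)
  show "f \<in> borel_measurable (lebesgue_on {a..b})"
    using assms(1) by (rule continuous_imp_measurable_on_sets_lebesgue) auto
  show "bounded (f ` {a..b})"
    using assms(1) by (intro compact_imp_bounded compact_continuous_image) auto
qed (use assms(2) in auto)

lemma indefinite_integral_diff:
  fixes g :: "real \<Rightarrow> real"
  assumes "g integrable_on {a..b}" and "a \<le> t" "t \<le> t'" "t' \<le> b"
  shows "integral {a..t'} g - integral {a..t} g = integral {t..t'} g"
  using Henstock_Kurzweil_Integration.integral_combine[of a t t' g] assms
    integrable_on_subinterval[OF assms(1), of a t'] by simp

lemma mono_on_indefinite_integral_nonneg:
  fixes f :: "real \<Rightarrow> real"
  assumes "f integrable_on {a..b}" and "\<And>x. x \<in> {a..b} \<Longrightarrow> 0 \<le> f x"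
  shows "mono_on {a..b} (\<lambda>s. integral {a..s} f)"
proof (rule mono_onI)
  fix t t' assume "t \<in> {a..b}" "t' \<in> {a..b}" "t \<le> t'"
  then have "integral {a..t'} f - integral {a..t} f = integral {t..t'} f"
    by (intro indefinite_integral_diff[OF assms(1)]) auto
  moreover have "0 \<le> integral {t..t'} f"
    using assms \<open>t \<in> {a..b}\<close> \<open>t' \<in> {a..b}\<close> by (intro integral_nonneg) (auto elim: integrable_on_subinterval)
  ultimately show "integral {a..t} f \<le> integral {a..t'} f"
    by simp
qed

lemma indefinite_integral_restrict:
  fixes \<theta> g :: "real \<Rightarrow> real"
  assumes g: "g integrable_on {a..b}" and \<theta>_eq: "\<And>s. s \<in> {a..b} \<Longrightarrow> \<theta> s = \<theta> a + integral {a..s} g"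
    and "a \<le> t" "t \<le> s" "s \<le> b"
  shows "\<theta> s = \<theta> t + integral {t..s} g"
proof -
  have "s \<in> {a..b}" "t \<in> {a..b}"
    using assms(3-5) by auto
  then have "\<theta> s - \<theta> t = integral {a..s} g - integral {a..t} g"
    by (simp only: \<theta>_eq[of s] \<theta>_eq[of t])
  also have "\<dots> = integral {t..s} g"
    using assms(3-5) by (rule indefinite_integral_diff[OF g])
  finally show ?thesis by simp
qed

lemma continuous_on_if_indefinite_integral:
  fixes \<theta> g :: "real \<Rightarrow> real"
  assumes "g integrable_on {a..b}" and "\<And>s. s \<in> {a..b} \<Longrightarrow> \<theta> s = \<theta> a + integral {a..s} g"
  shows "continuous_on {a..b} \<theta>"
proof -
  have "continuous_on {a..b} (\<lambda>s. \<theta> a + integral {a..s} g)"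
    using assms(1) by (intro continuous_intros indefinite_integral_continuous_1)
  then show ?thesis
    by (rule continuous_on_eq) (use assms(2) in presburger)
qed

lemma abs_indefinite_integral_le_variation:
  fixes \<theta> g :: "real \<Rightarrow> real"
  assumes g: "g absolutely_integrable_on {t..t'}"
    and \<theta>_eq: "\<And>s. s \<in> {t..t'} \<Longrightarrow> \<theta> s = \<theta> t + integral {t..s} g"
    and s: "s \<in> {t..t'}"
  shows "\<bar>\<theta> s - \<theta> t\<bar> \<le> integral {t..t'} (\<lambda>u. \<bar>g u\<bar>)"
proof -
  have int: "g integrable_on {t..s}" "(\<lambda>u. \<bar>g u\<bar>) integrable_on {t..s}"
    "(\<lambda>u. \<bar>g u\<bar>) integrable_on {t..t'}"
    using g[unfolded absolutely_integrable_on_def] s by (auto elim!: integrable_on_subinterval)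
  then have "norm (integral {t..s} g) \<le> integral {t..s} (\<lambda>u. \<bar>g u\<bar>)"
    by (intro integral_norm_bound_integral) auto
  then have "\<bar>\<theta> s - \<theta> t\<bar> \<le> integral {t..s} (\<lambda>u. \<bar>g u\<bar>)"
    using \<theta>_eq[OF s] by simp
  also have "\<dots> \<le> integral {t..t'} (\<lambda>u. \<bar>g u\<bar>)"
    using s int by (intro integral_subset_le) auto
  finally show ?thesis .
qed

lemma integral_comp_mult_frozen_bound:
  fixes \<theta> g W :: "real \<Rightarrow> real"
  assumes "t \<le> t'" and g: "g absolutely_integrable_on {t..t'}"
    and \<theta>_eq: "\<And>s. s \<in> {t..t'} \<Longrightarrow> \<theta> s = \<theta> t + integral {t..s} g"
    and \<theta>_range: "\<theta> ` {t..t'} \<subseteq> {m..M}" and W_lip: "l-lipschitz_on {m..M} W"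
  shows "\<bar>integral {t..t'} (\<lambda>s. W (\<theta> s) * g s) - W (\<theta> t) * (\<theta> t' - \<theta> t)\<bar>
           \<le> l * (integral {t..t'} (\<lambda>s. \<bar>g s\<bar>))\<^sup>2"
proof -
  define \<delta> where "\<delta> = integral {t..t'} (\<lambda>s. \<bar>g s\<bar>)"
  define h where "h s = (W (\<theta> s) - W (\<theta> t)) * g s" for s
  have g_int: "g integrable_on {t..t'}" "(\<lambda>s. \<bar>g s\<bar>) integrable_on {t..t'}"
    using g[unfolded absolutely_integrable_on_def] by auto
  have "continuous_on {t..t'} (\<lambda>s. W (\<theta> s))"
    using lipschitz_on_continuous_on[OF W_lip] continuous_on_if_indefinite_integral[OF g_int(1) \<theta>_eq]
      \<theta>_range by (rule continuous_on_compose2)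
  then have "continuous_on {t..t'} (\<lambda>s. W (\<theta> s) - W (\<theta> t))"
    by (intro continuous_intros)
  then have h_int: "h integrable_on {t..t'}"
    unfolding h_def
    by (rule set_lebesgue_integral_eq_integral(1)[OF absolutely_integrable_continuous_mult[OF _ g]])
  have W_osc: "\<bar>W (\<theta> s) - W (\<theta> t)\<bar> \<le> l * \<delta>" if s: "s \<in> {t..t'}" for s
  proof -
    have "\<theta> s \<in> {m..M}" "\<theta> t \<in> {m..M}"
      using \<theta>_range s \<open>t \<le> t'\<close> by (auto simp: image_subset_iff)
    then have "\<bar>W (\<theta> s) - W (\<theta> t)\<bar> \<le> l * \<bar>\<theta> s - \<theta> t\<bar>"
      using lipschitz_onD[OF W_lip] by (simp add: dist_real_def)
    also have "\<dots> \<le> l * \<delta>"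
      unfolding \<delta>_def using abs_indefinite_integral_le_variation[OF g \<theta>_eq s] lipschitz_on_nonneg[OF W_lip]
      by (rule mult_left_mono)
    finally show ?thesis .
  qed
  have "integral {t..t'} (\<lambda>s. W (\<theta> s) * g s) - W (\<theta> t) * (\<theta> t' - \<theta> t) = integral {t..t'} h"
  proof -
    have "(\<lambda>s. W (\<theta> s) * g s) = (\<lambda>s. h s + W (\<theta> t) * g s)"
      by (simp add: h_def algebra_simps)
    moreover have "integral {t..t'} g = \<theta> t' - \<theta> t"
      using \<theta>_eq[of t'] \<open>t \<le> t'\<close> by simp
    ultimately show ?thesis
      using integral_add[OF h_int integrable_on_mult_right[OF g_int(1)]] by simp
  qed
  also have "\<bar>integral {t..t'} h\<bar> \<le> integral {t..t'} (\<lambda>s. l * \<delta> * \<bar>g s\<bar>)"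
    using integral_norm_bound_integral[OF h_int integrable_on_mult_right[OF g_int(2)], of "l * \<delta>"]
      W_osc by (simp add: h_def abs_mult mult_right_mono)
  also have "\<dots> = l * \<delta>\<^sup>2"
    by (simp add: \<delta>_def power2_eq_square)
  finally show ?thesis
    by (simp add: \<delta>_def)
qed

lemma chain_rule_increment_bound:
  fixes \<theta> g W Q :: "real \<Rightarrow> real"
  assumes "t \<le> t'" and g: "g absolutely_integrable_on {t..t'}"
    and \<theta>_eq: "\<And>s. s \<in> {t..t'} \<Longrightarrow> \<theta> s = \<theta> t + integral {t..s} g"
    and \<theta>_range: "\<theta> ` {t..t'} \<subseteq> {m..M}"
    and W_lip: "l-lipschitz_on {m..M} W" and Q_cont: "continuous_on {m..M} Q"
    and Q_deriv: "\<And>x. x \<in> {m<..<M} \<Longrightarrow> (Q has_real_derivative W x) (at x)"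
  shows "\<bar>integral {t..t'} (\<lambda>s. W (\<theta> s) * g s) - (Q (\<theta> t') - Q (\<theta> t))\<bar>
           \<le> 2 * l * (integral {t..t'} (\<lambda>s. \<bar>g s\<bar>))\<^sup>2"
proof -
  define \<delta> where "\<delta> = integral {t..t'} (\<lambda>s. \<bar>g s\<bar>)"
  have "\<bar>Q (\<theta> t') - Q (\<theta> t) - W (\<theta> t) * (\<theta> t' - \<theta> t)\<bar> \<le> l * (\<theta> t' - \<theta> t)\<^sup>2"
    using \<theta>_range \<open>t \<le> t'\<close>
    by (intro lipschitz_derivative_remainder_bound[OF W_lip Q_cont Q_deriv]) (auto simp: image_subset_iff)
  also have "\<dots> \<le> l * \<delta>\<^sup>2"
  proof -
    have "\<bar>\<theta> t' - \<theta> t\<bar>\<^sup>2 \<le> \<delta>\<^sup>2"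
      unfolding \<delta>_def using abs_indefinite_integral_le_variation[OF g \<theta>_eq] \<open>t \<le> t'\<close>
      by (intro power_mono) auto
    then show ?thesis
      using lipschitz_on_nonneg[OF W_lip] by (simp add: mult_left_mono)
  qed
  finally show ?thesis
    using integral_comp_mult_frozen_bound[OF assms(1-5)] by (simp add: \<delta>_def)
qed

(* Q \<circ> \<theta> need not be differentiable at every point, so no substitution rule applies.
   Instead, the increments of D s = \<integral> W(\<theta>) g - Q (\<theta> s) over [a, s] are quadratic in those of
   the variation V s = \<integral> \<bar>g\<bar> over [a, s], which forces D to be constant. *)
theorem chain_rule_indefinite_integral:
  fixes \<theta> g W Q :: "real \<Rightarrow> real"
  assumes "a \<le> b" and g: "g absolutely_integrable_on {a..b}"
    and \<theta>_eq: "\<And>s. s \<in> {a..b} \<Longrightarrow> \<theta> s = \<theta> a + integral {a..s} g"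
    and \<theta>_range: "\<theta> ` {a..b} \<subseteq> {m..M}"
    and W_lip: "l-lipschitz_on {m..M} W" and Q_cont: "continuous_on {m..M} Q"
    and Q_deriv: "\<And>x. x \<in> {m<..<M} \<Longrightarrow> (Q has_real_derivative W x) (at x)"
  shows "((\<lambda>s. W (\<theta> s) * g s) has_integral Q (\<theta> b) - Q (\<theta> a)) {a..b}"
proof -
  define V where "V s = integral {a..s} (\<lambda>u. \<bar>g u\<bar>)" for s
  define D where "D s = integral {a..s} (\<lambda>u. W (\<theta> u) * g u) - Q (\<theta> s)" for s
  have g_int: "g integrable_on {a..b}" and abs_g_int: "(\<lambda>u. \<bar>g u\<bar>) integrable_on {a..b}"
    using g[unfolded absolutely_integrable_on_def] by auto
  have "continuous_on {a..b} (\<lambda>s. W (\<theta> s))"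
    using lipschitz_on_continuous_on[OF W_lip] continuous_on_if_indefinite_integral[OF g_int \<theta>_eq]
      \<theta>_range by (rule continuous_on_compose2)
  then have Wg_int: "(\<lambda>s. W (\<theta> s) * g s) integrable_on {a..b}"
    by (rule set_lebesgue_integral_eq_integral(1)[OF absolutely_integrable_continuous_mult[OF _ g]])
  have increment: "\<bar>D t' - D t\<bar> \<le> 2 * l * (V t' - V t)\<^sup>2"
    if t: "a \<le> t" "t \<le> t'" "t' \<le> b" for t t'
  proof -
    have D_diff: "D t' - D t = integral {t..t'} (\<lambda>u. W (\<theta> u) * g u) - (Q (\<theta> t') - Q (\<theta> t))"
      unfolding D_def using indefinite_integral_diff[OF Wg_int t] by simp
    have V_diff: "V t' - V t = integral {t..t'} (\<lambda>u. \<bar>g u\<bar>)"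
      unfolding V_def by (rule indefinite_integral_diff[OF abs_g_int t])
    have \<theta>_eq_t: "\<theta> s = \<theta> t + integral {t..s} g" if "s \<in> {t..t'}" for s
      using t that by (intro indefinite_integral_restrict[OF g_int \<theta>_eq]) auto
    have "g absolutely_integrable_on {t..t'}"
      using g t by (auto intro: absolutely_integrable_on_subinterval)
    moreover have "\<theta> ` {t..t'} \<subseteq> {m..M}"
      using \<theta>_range t by auto
    ultimately have "\<bar>integral {t..t'} (\<lambda>u. W (\<theta> u) * g u) - (Q (\<theta> t') - Q (\<theta> t))\<bar>
        \<le> 2 * l * (integral {t..t'} (\<lambda>u. \<bar>g u\<bar>))\<^sup>2"
      by (intro chain_rule_increment_bound[OF \<open>t \<le> t'\<close> _ \<theta>_eq_t _ W_lip Q_cont Q_deriv])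
    then show ?thesis
      by (simp only: D_diff V_diff)
  qed
  have "D b = D a"
  proof (rule eq_if_increments_bounded_by_square[OF \<open>a \<le> b\<close> _ _ increment])
    show "continuous_on {a..b} V"
      unfolding V_def using abs_g_int by (rule indefinite_integral_continuous_1)
    show "mono_on {a..b} V"
      unfolding V_def using abs_g_int by (rule mono_on_indefinite_integral_nonneg) simp
  qed
  then show ?thesis
    using Wg_int by (simp add: D_def has_integral_iff)
qed

section \<open>Separable differential equations\<close>

lemma eq_indefinite_integral_if_has_derivative:
  fixes \<theta> g :: "real \<Rightarrow> real"
  assumes \<theta>_cont: "continuous_on {a..b} \<theta>" and g_cont: "continuous_on {a..b} g"
    and \<theta>_deriv: "\<And>s. s \<in> {a<..<b} \<Longrightarrow> (\<theta> has_real_derivative g s) (at s)"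
    and s: "s \<in> {a..b}"
  shows "\<theta> s = \<theta> a + integral {a..s} g"
proof -
  have "(g has_integral \<theta> s - \<theta> a) {a..s}"
  proof (rule fundamental_theorem_of_calculus_interior)
    show "continuous_on {a..s} \<theta>"
      using s by (intro continuous_on_subset[OF \<theta>_cont]) auto
    show "(\<theta> has_vector_derivative g x) (at x)" if "x \<in> {a<..<s}" for x
      using \<theta>_deriv[of x] s that by (simp add: has_real_derivative_iff_has_vector_derivative)
  qed (use s in auto)
  then show ?thesis
    by (simp add: integral_unique)
qed

lemma strict_mono_on_if_derivative_pos:
  fixes S S' :: "real \<Rightarrow> real"
  assumes S_cont: "continuous_on {a..b} S"
    and S_deriv: "\<And>x. x \<in> {a<..<b} \<Longrightarrow> (S has_real_derivative S' x) (at x)"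
    and S'_pos: "\<And>x. x \<in> {a<..<b} \<Longrightarrow> 0 < S' x"
  shows "strict_mono_on {a..b} S"
proof (rule strict_mono_onI)
  fix x y assume xy: "x \<in> {a..b}" "y \<in> {a..b}" "x < y"
  show "S x < S y"
  proof (rule DERIV_pos_imp_increasing_open[OF \<open>x < y\<close>])
    show "\<exists>d. (S has_real_derivative d) (at z) \<and> 0 < d" if "x < z" "z < y" for z
      using xy that S_deriv[of z] S'_pos[of z] by auto
    show "continuous_on {x..y} S"
      using xy by (intro continuous_on_subset[OF S_cont]) auto
  qed
qed

lemma inverse_of_strict_mono_on_Icc:
  fixes S :: "real \<Rightarrow> real"
  assumes "a \<le> b" and S_strict: "strict_mono_on {a..b} S" and S_cont: "continuous_on {a..b} S"
  defines "T \<equiv> the_inv_into {a..b} S"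
  shows "T ` {S a..S b} = {a..b}" and "continuous_on {S a..S b} T"
    and "\<And>x. x \<in> {a..b} \<Longrightarrow> T (S x) = x" and "\<And>y. y \<in> {S a..S b} \<Longrightarrow> S (T y) = y"
    and "\<And>y D. y \<in> {S a<..<S b} \<Longrightarrow> (S has_real_derivative D) (at (T y)) \<Longrightarrow> D \<noteq> 0 \<Longrightarrow>
           (T has_real_derivative inverse D) (at y)"
proof -
  have S_inj: "inj_on S {a..b}"
    using S_strict by (rule strict_mono_on_imp_inj_on)
  have S_image: "S ` {a..b} = {S a..S b}"
  proof
    show "S ` {a..b} \<subseteq> {S a..S b}"
      using strict_mono_on_leD[OF S_strict] \<open>a \<le> b\<close> by auto
    show "{S a..S b} \<subseteq> S ` {a..b}"
      using IVT'[of S a _ b] S_cont \<open>a \<le> b\<close> by (fastforce simp: image_iff)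
  qed
  show "T ` {S a..S b} = {a..b}"
    using the_inv_into_onto[OF S_inj] S_image by (simp add: T_def)
  show T_cont: "continuous_on {S a..S b} T"
    using continuous_on_inv[OF S_cont compact_Icc] the_inv_into_f_f[OF S_inj] S_image
    by (simp add: T_def)
  show "T (S x) = x" if "x \<in> {a..b}" for x
    using the_inv_into_f_f[OF S_inj that] by (simp add: T_def)
  show S_T: "S (T y) = y" if "y \<in> {S a..S b}" for y
    using f_the_inv_into_f[OF S_inj] S_image that by (simp add: T_def)
  show "(T has_real_derivative inverse D) (at y)"
    if "y \<in> {S a<..<S b}" "(S has_real_derivative D) (at (T y))" "D \<noteq> 0" for y D
  proof (rule DERIV_inverse_function[where a = "S a" and b = "S b"])
    show "isCont T y"
      using continuous_on_interior[OF T_cont] that(1) by simp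
  qed (use that S_T in auto)
qed

lemma separable_ode_solution:
  fixes f :: "real \<Rightarrow> real"
  assumes "0 < M" and f_cont: "continuous_on {0..M} f" and f_pos: "\<And>\<phi>. \<phi> \<in> {0..M} \<Longrightarrow> 0 < f \<phi>"
  obtains L \<theta> where "0 < L" "continuous_on {0..L} \<theta>" "\<theta> ` {0..L} = {0..M}" "\<theta> 0 = 0" "\<theta> L = M"
    "\<And>s. s \<in> {0<..<L} \<Longrightarrow> (\<theta> has_real_derivative f (\<theta> s)) (at s)"
proof -
  define S where "S = (\<lambda>\<phi>. integral {0..\<phi>} (\<lambda>\<psi>. 1 / f \<psi>))"
  define L \<theta> where "L = S M" and "\<theta> = the_inv_into {0..M} S"
  have inv_f_cont: "continuous_on {0..M} (\<lambda>\<psi>. 1 / f \<psi>)"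
    using f_cont f_pos by (intro continuous_intros) (auto simp: less_imp_neq[symmetric])
  have S_cont: "continuous_on {0..M} S"
    unfolding S_def using inv_f_cont by (intro indefinite_integral_continuous_1 integrable_continuous_real)
  have S_deriv: "(S has_real_derivative 1 / f \<phi>) (at \<phi>)" if "\<phi> \<in> {0<..<M}" for \<phi>
    using integral_has_real_derivative[OF inv_f_cont, of \<phi>] at_within_Icc_at[of 0 \<phi> M] that
    by (simp add: S_def)
  have S_strict: "strict_mono_on {0..M} S"
    using S_cont S_deriv by (rule strict_mono_on_if_derivative_pos) (use f_pos in auto)
  have "S 0 = 0"
    by (simp add: S_def)
  then have "0 < L"
    using strict_mono_onD[OF S_strict, of 0 M] \<open>0 < M\<close> by (simp add: L_def)
  note inverse = inverse_of_strict_mono_on_Icc[OF less_imp_le[OF \<open>0 < M\<close>] S_strict S_cont,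
      folded \<theta>_def L_def, unfolded \<open>S 0 = 0\<close>]
  have "\<theta> 0 = 0" "\<theta> L = M"
    using inverse(3)[of 0] inverse(3)[of M] \<open>S 0 = 0\<close> \<open>0 < M\<close> by (auto simp: L_def)
  moreover have "(\<theta> has_real_derivative f (\<theta> s)) (at s)" if s: "s \<in> {0<..<L}" for s
  proof -
    have "\<theta> s \<in> {0..M}" "S (\<theta> s) = s"
      using inverse(1,4) \<open>0 < M\<close> s by auto
    then have "\<theta> s \<in> {0<..<M}"
      using \<open>S 0 = 0\<close> s by (auto simp: L_def less_le)
    then have "(\<theta> has_real_derivative inverse (1 / f (\<theta> s))) (at s)"
      using \<open>0 < M\<close> s f_pos[of "\<theta> s"] by (intro inverse(5) S_deriv) auto
    then show ?thesis by simp
  qed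
  ultimately show ?thesis
    using that \<open>0 < L\<close> inverse(1,2) \<open>0 < M\<close> by simp
qed

section \<open>Admissible curves\<close>

lemma set_integral_continuous_eq_integral:
  fixes f :: "real \<Rightarrow> real"
  assumes "continuous_on {a..b} f"
  shows "(LINT x:{a..b}|lborel. f x) = integral {a..b} f"
  using set_borel_integral_eq_integral(2)[OF borel_integrable_atLeastAtMost'[OF assms]] .

lemma H1_with_derivD:
  assumes "H1_with_deriv L \<theta> g"
  shows "g absolutely_integrable_on {0..L}"
    and "\<And>s. s \<in> {0..L} \<Longrightarrow> \<theta> s = \<theta> 0 + integral {0..s} g"
    and "((\<lambda>s. (g s)\<^sup>2) has_integral (LINT s:{0..L}|lborel. (g s)\<^sup>2)) {0..L}"
proof -
  have g: "set_integrable lborel {0..L} g" and g2: "set_integrable lborel {0..L} (\<lambda>s. (g s)\<^sup>2)"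
    and \<theta>: "\<And>s. s \<in> {0..L} \<Longrightarrow> \<theta> s = \<theta> 0 + (LINT u:{0..s}|lborel. g u)"
    using assms unfolding H1_with_deriv_def by blast+
  show "g absolutely_integrable_on {0..L}"
    using set_borel_integral_eq_integral(1)[OF g] set_borel_integral_eq_integral(1)[OF set_integrable_abs[OF g]]
    by (rule abs_absolutely_integrableI_1)
  show "\<theta> s = \<theta> 0 + integral {0..s} g" if "s \<in> {0..L}" for s
  proof -
    have "set_integrable lborel {0..s} g"
      using that by (intro set_integrable_subset[OF g]) auto
    then show ?thesis
      using \<theta>[OF that] set_borel_integral_eq_integral(2) by metis
  qed
  show "((\<lambda>s. (g s)\<^sup>2) has_integral (LINT s:{0..L}|lborel. (g s)\<^sup>2)) {0..L}"
    using set_borel_integral_eq_integral[OF g2] by (simp add: has_integral_iff)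
qed

lemma H1_with_derivI:
  fixes \<theta> g :: "real \<Rightarrow> real"
  assumes "continuous_on {0..L} g" and "\<And>s. s \<in> {0..L} \<Longrightarrow> \<theta> s = \<theta> 0 + integral {0..s} g"
  shows "H1_with_deriv L \<theta> g"
proof -
  have "\<theta> s = \<theta> 0 + (LINT u:{0..s}|lborel. g u)" if s: "s \<in> {0..L}" for s
  proof -
    have "continuous_on {0..s} g"
      using s by (intro continuous_on_subset[OF assms(1)]) auto
    then show ?thesis
      using assms(2)[OF s] set_integral_continuous_eq_integral by metis
  qed
  moreover have "set_integrable lborel {0..L} g" "set_integrable lborel {0..L} (\<lambda>s. (g s)\<^sup>2)"
    using assms(1) by (auto intro!: borel_integrable_atLeastAtMost' continuous_intros)
  ultimately show ?thesis
    unfolding H1_with_deriv_def by blast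
qed

lemma integral_nonneg_if_AE_nonneg:
  fixes g :: "real \<Rightarrow> real"
  assumes g: "set_integrable lborel {a..b} g" and g_nonneg: "AE s in lborel. s \<in> {a..b} \<longrightarrow> 0 \<le> g s"
    and "a \<le> t" "t' \<le> b"
  shows "0 \<le> integral {t..t'} g"
proof -
  have g_sub: "set_integrable lborel {t..t'} g"
    using assms by (intro set_integrable_subset[OF g]) auto
  have "0 \<le> (LINT s:{t..t'}|lborel. g s)"
    unfolding set_lebesgue_integral_def
  proof (rule integral_nonneg_AE)
    show "AE s in lborel. 0 \<le> indicator {t..t'} s *\<^sub>R g s"
      using g_nonneg by eventually_elim (use assms in \<open>auto simp: indicator_def\<close>)
  qed
  then show ?thesis
    using set_borel_integral_eq_integral(2)[OF g_sub] by simp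
qed

(* Rotating by -\<alpha> maps the chord B - A = 2 sin \<alpha> (cos \<alpha>, sin \<alpha>) onto (2 sin \<alpha>, 0). *)
lemma closing_conditions_rotated:
  fixes \<theta> :: "real \<Rightarrow> real"
  assumes "continuous_on {a..b} \<theta>"
  shows "integral {a..b} (\<lambda>s. cos (\<theta> s)) = sin (2 * \<alpha>) \<and> integral {a..b} (\<lambda>s. sin (\<theta> s)) = 1 - cos (2 * \<alpha>)
     \<longleftrightarrow> integral {a..b} (\<lambda>s. cos (\<theta> s - \<alpha>)) = 2 * sin \<alpha> \<and> integral {a..b} (\<lambda>s. sin (\<theta> s - \<alpha>)) = 0"
proof -
  define C S where "C = integral {a..b} (\<lambda>s. cos (\<theta> s))" and "S = integral {a..b} (\<lambda>s. sin (\<theta> s))"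
  have "((\<lambda>s. cos (\<theta> s)) has_integral C) {a..b}" "((\<lambda>s. sin (\<theta> s)) has_integral S) {a..b}"
    unfolding C_def S_def using assms by (auto intro!: integrable_integral integrable_continuous_real continuous_intros)
  then have "((\<lambda>s. cos \<alpha> * cos (\<theta> s) + sin \<alpha> * sin (\<theta> s)) has_integral cos \<alpha> * C + sin \<alpha> * S) {a..b}"
    and "((\<lambda>s. cos \<alpha> * sin (\<theta> s) - sin \<alpha> * cos (\<theta> s)) has_integral cos \<alpha> * S - sin \<alpha> * C) {a..b}"
    by (auto intro!: has_integral_add has_integral_diff has_integral_mult_right)
  moreover have "(\<lambda>s. cos (\<theta> s - \<alpha>)) = (\<lambda>s. cos \<alpha> * cos (\<theta> s) + sin \<alpha> * sin (\<theta> s))"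
    and "(\<lambda>s. sin (\<theta> s - \<alpha>)) = (\<lambda>s. cos \<alpha> * sin (\<theta> s) - sin \<alpha> * cos (\<theta> s))"
    by (simp_all add: cos_diff sin_diff mult.commute)
  ultimately have "integral {a..b} (\<lambda>s. cos (\<theta> s - \<alpha>)) = cos \<alpha> * C + sin \<alpha> * S"
    and "integral {a..b} (\<lambda>s. sin (\<theta> s - \<alpha>)) = cos \<alpha> * S - sin \<alpha> * C"
    by (simp_all add: integral_unique)
  moreover have pyth: "(sin \<alpha>)\<^sup>2 + (cos \<alpha>)\<^sup>2 = 1"
    by (rule sin_cos_squared_add)
  have rotate_back: "C = cos \<alpha> * (cos \<alpha> * C + sin \<alpha> * S) - sin \<alpha> * (cos \<alpha> * S - sin \<alpha> * C)"
    "S = sin \<alpha> * (cos \<alpha> * C + sin \<alpha> * S) + cos \<alpha> * (cos \<alpha> * S - sin \<alpha> * C)"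
    using pyth by algebra+
  have "C = sin (2 * \<alpha>) \<and> S = 1 - cos (2 * \<alpha>) \<longleftrightarrow>
      cos \<alpha> * C + sin \<alpha> * S = 2 * sin \<alpha> \<and> cos \<alpha> * S - sin \<alpha> * C = 0"
  proof
    assume "C = sin (2 * \<alpha>) \<and> S = 1 - cos (2 * \<alpha>)"
    then have "C = 2 * sin \<alpha> * cos \<alpha>" "S = 2 * (sin \<alpha>)\<^sup>2"
      by (simp_all add: sin_double cos_double_sin)
    then show "cos \<alpha> * C + sin \<alpha> * S = 2 * sin \<alpha> \<and> cos \<alpha> * S - sin \<alpha> * C = 0"
      using pyth by algebra
  next
    assume "cos \<alpha> * C + sin \<alpha> * S = 2 * sin \<alpha> \<and> cos \<alpha> * S - sin \<alpha> * C = 0"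
    then have "C = 2 * sin \<alpha> * cos \<alpha>" "S = 2 * (sin \<alpha>)\<^sup>2"
      using rotate_back by (simp_all add: power2_eq_square)
    then show "C = sin (2 * \<alpha>) \<and> S = 1 - cos (2 * \<alpha>)"
      by (simp add: sin_double cos_double_sin)
  qed
  ultimately show ?thesis
    by (simp add: C_def S_def)
qed

lemma admissible_range:
  assumes "0 \<le> L" and adm: "admissible \<alpha> L \<theta> g"
  shows "\<theta> ` {0..L} \<subseteq> {0..2 * \<alpha>}"
proof -
  have H1: "H1_with_deriv L \<theta> g" and g_nonneg: "AE s in lborel. s \<in> {0..L} \<longrightarrow> 0 \<le> g s"
    and "\<theta> 0 = 0" "\<theta> L = 2 * \<alpha>"
    using adm by (simp_all add: admissible_def)
  have g: "set_integrable lborel {0..L} g"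
    using H1 unfolding H1_with_deriv_def by blast
  have g_int: "g integrable_on {0..L}"
    using set_borel_integral_eq_integral(1)[OF g] .
  have \<theta>_mono: "\<theta> t \<le> \<theta> t'" if "0 \<le> t" "t \<le> t'" "t' \<le> L" for t t'
    using indefinite_integral_restrict[OF g_int H1_with_derivD(2)[OF H1] that]
      integral_nonneg_if_AE_nonneg[OF g g_nonneg that(1,3)] by simp
  show ?thesis
    using \<theta>_mono[of 0] \<theta>_mono[of _ L] \<open>0 \<le> L\<close> \<open>\<theta> 0 = 0\<close> \<open>\<theta> L = 2 * \<alpha>\<close> by auto
qed

lemma admissible_has_integral_cos_rotated:
  assumes "0 \<le> L" and adm: "admissible \<alpha> L \<theta> g"
  shows "((\<lambda>s. cos (\<theta> s - \<alpha>)) has_integral 2 * sin \<alpha>) {0..L}"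
proof -
  have H1: "H1_with_deriv L \<theta> g"
    using adm by (simp add: admissible_def)
  have "continuous_on {0..L} \<theta>"
    using set_lebesgue_integral_eq_integral(1)[OF H1_with_derivD(1)[OF H1]] H1_with_derivD(2)[OF H1]
    by (rule continuous_on_if_indefinite_integral)
  moreover from this have "integral {0..L} (\<lambda>s. cos (\<theta> s)) = sin (2 * \<alpha>)"
    "integral {0..L} (\<lambda>s. sin (\<theta> s)) = 1 - cos (2 * \<alpha>)"
    using adm by (simp_all add: admissible_def continuous_intros flip: set_integral_continuous_eq_integral)
  ultimately have "integral {0..L} (\<lambda>s. cos (\<theta> s - \<alpha>)) = 2 * sin \<alpha>"
    using closing_conditions_rotated by blast
  moreover have "(\<lambda>s. cos (\<theta> s - \<alpha>)) integrable_on {0..L}"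
    using \<open>continuous_on {0..L} \<theta>\<close> by (intro integrable_continuous_real continuous_intros)
  ultimately show ?thesis
    by (simp add: has_integral_iff)
qed

section \<open>The elastica weight\<close>

lemma abs_cos_diff_le: "\<bar>cos x - cos y\<bar> \<le> \<bar>x - y\<bar>" for x y :: real
proof -
  have "\<bar>cos x - cos y\<bar> = 2 * \<bar>sin ((x + y) / 2)\<bar> * \<bar>sin ((y - x) / 2)\<bar>"
    by (simp add: cos_diff_cos abs_mult)
  also have "\<dots> \<le> 2 * 1 * \<bar>(y - x) / 2\<bar>"
    by (intro mult_mono abs_sin_x_le_abs_x) auto
  finally show ?thesis by (simp add: abs_minus_commute)
qed

lemma abs_sqrt_diff_le:
  fixes u v c :: real
  assumes "0 < c" "c \<le> u" "c \<le> v"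
  shows "\<bar>sqrt u - sqrt v\<bar> \<le> \<bar>u - v\<bar> / (2 * sqrt c)"
proof -
  have "2 * sqrt c \<le> sqrt u + sqrt v"
    using real_sqrt_le_mono[OF assms(2)] real_sqrt_le_mono[OF assms(3)] by linarith
  then have "\<bar>sqrt u - sqrt v\<bar> * (2 * sqrt c) \<le> \<bar>sqrt u - sqrt v\<bar> * (sqrt u + sqrt v)"
    by (rule mult_left_mono) simp
  also have "\<dots> = \<bar>(sqrt u - sqrt v) * (sqrt u + sqrt v)\<bar>"
    using assms by (simp add: abs_mult)
  also have "\<dots> = \<bar>u - v\<bar>"
    using assms by (simp add: algebra_simps)
  finally show ?thesis
    using assms by (simp add: pos_le_divide_eq)
qed

definition elastica_weight :: "real \<Rightarrow> real \<Rightarrow> real" where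
  "elastica_weight \<alpha> \<phi> = sqrt (cos (\<phi> - \<alpha>))"

definition weight_integral :: "real \<Rightarrow> real" where
  "weight_integral \<alpha> = integral {0..2 * \<alpha>} (elastica_weight \<alpha>)"

definition elastica_constant :: "real \<Rightarrow> real" where
  "elastica_constant \<alpha> = weight_integral \<alpha> / (2 * sin \<alpha>)"

context
  fixes \<alpha> :: real
  assumes \<alpha>_pos: "0 < \<alpha>" and \<alpha>_less: "\<alpha> < pi / 2"
begin

lemma cos_alpha_pos: "0 < cos \<alpha>"
  using \<alpha>_pos \<alpha>_less by (intro cos_gt_zero_pi) auto

lemma sin_alpha_pos: "0 < sin \<alpha>"
  using \<alpha>_pos \<alpha>_less by (intro sin_gt_zero) auto

lemma cos_alpha_le_cos_diff:
  assumes "\<phi> \<in> {0..2 * \<alpha>}"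
  shows "cos \<alpha> \<le> cos (\<phi> - \<alpha>)"
proof -
  have "cos \<alpha> \<le> cos \<bar>\<phi> - \<alpha>\<bar>"
    using assms \<alpha>_less by (subst cos_mono_le_eq) auto
  then show ?thesis by simp
qed

lemma elastica_weight_squared:
  assumes "\<phi> \<in> {0..2 * \<alpha>}"
  shows "(elastica_weight \<alpha> \<phi>)\<^sup>2 = cos (\<phi> - \<alpha>)"
  using cos_alpha_le_cos_diff[OF assms] cos_alpha_pos by (simp add: elastica_weight_def)

lemma elastica_weight_pos:
  assumes "\<phi> \<in> {0..2 * \<alpha>}"
  shows "0 < elastica_weight \<alpha> \<phi>"
  using cos_alpha_le_cos_diff[OF assms] cos_alpha_pos by (simp add: elastica_weight_def)

lemma elastica_weight_lipschitz:
  "(1 / (2 * sqrt (cos \<alpha>)))-lipschitz_on {0..2 * \<alpha>} (elastica_weight \<alpha>)"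
proof (rule lipschitz_onI)
  fix x y assume "x \<in> {0..2 * \<alpha>}" "y \<in> {0..2 * \<alpha>}"
  then have "\<bar>elastica_weight \<alpha> x - elastica_weight \<alpha> y\<bar>
      \<le> \<bar>cos (x - \<alpha>) - cos (y - \<alpha>)\<bar> / (2 * sqrt (cos \<alpha>))"
    unfolding elastica_weight_def
    by (intro abs_sqrt_diff_le cos_alpha_pos cos_alpha_le_cos_diff)
  also have "\<dots> \<le> \<bar>x - y\<bar> / (2 * sqrt (cos \<alpha>))"
    using abs_cos_diff_le[of "x - \<alpha>" "y - \<alpha>"] cos_alpha_pos by (intro divide_right_mono) auto
  finally show "dist (elastica_weight \<alpha> x) (elastica_weight \<alpha> y) \<le> 1 / (2 * sqrt (cos \<alpha>)) * dist x y"
    by (simp add: dist_real_def)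
qed (use cos_alpha_pos in simp)

lemma elastica_weight_continuous: "continuous_on {0..2 * \<alpha>} (elastica_weight \<alpha>)"
  by (rule lipschitz_on_continuous_on[OF elastica_weight_lipschitz])

lemma weight_integral_pos: "0 < weight_integral \<alpha>"
proof -
  have "integral {0..2 * \<alpha>} (\<lambda>_. sqrt (cos \<alpha>)) \<le> weight_integral \<alpha>"
    unfolding weight_integral_def
    using elastica_weight_continuous cos_alpha_le_cos_diff
    by (intro integral_le integrable_continuous_real) (auto simp: elastica_weight_def)
  moreover have "0 < integral {0..2 * \<alpha>} (\<lambda>_. sqrt (cos \<alpha>))"
    using \<alpha>_pos cos_alpha_pos by simp
  ultimately show ?thesis by linarith
qed

lemma has_integral_elastica_weight_comp:
  fixes \<theta> g :: "real \<Rightarrow> real"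
  assumes "0 \<le> L" and g: "g absolutely_integrable_on {0..L}"
    and \<theta>_eq: "\<And>s. s \<in> {0..L} \<Longrightarrow> \<theta> s = \<theta> 0 + integral {0..s} g"
    and \<theta>_range: "\<theta> ` {0..L} \<subseteq> {0..2 * \<alpha>}" and "\<theta> 0 = 0" and "\<theta> L = 2 * \<alpha>"
  shows "((\<lambda>s. elastica_weight \<alpha> (\<theta> s) * g s) has_integral weight_integral \<alpha>) {0..L}"
proof -
  define Q where "Q = (\<lambda>\<phi>. integral {0..\<phi>} (elastica_weight \<alpha>))"
  have "((\<lambda>s. elastica_weight \<alpha> (\<theta> s) * g s) has_integral Q (\<theta> L) - Q (\<theta> 0)) {0..L}"
  proof (rule chain_rule_indefinite_integral[OF \<open>0 \<le> L\<close> g \<theta>_eq \<theta>_range elastica_weight_lipschitz])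
    show "continuous_on {0..2 * \<alpha>} Q"
      unfolding Q_def using elastica_weight_continuous
      by (intro indefinite_integral_continuous_1 integrable_continuous_real)
    show "(Q has_real_derivative elastica_weight \<alpha> \<phi>) (at \<phi>)" if "\<phi> \<in> {0<..<2 * \<alpha>}" for \<phi>
      using integral_has_real_derivative[OF elastica_weight_continuous, of \<phi>]
        at_within_Icc_at[of 0 \<phi> "2 * \<alpha>"] that
      by (simp add: Q_def)
  qed
  then show ?thesis
    using \<open>\<theta> 0 = 0\<close> \<open>\<theta> L = 2 * \<alpha>\<close> by (simp add: Q_def weight_integral_def)
qed

lemma elastica_constant_pos: "0 < elastica_constant \<alpha>"
  unfolding elastica_constant_def
  using weight_integral_pos sin_alpha_pos by simp

section \<open>Minimal energy\<close>

lemma energy_lower_bound: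
  assumes "0 < L" and adm: "admissible \<alpha> L \<theta> g"
  shows "(weight_integral \<alpha>)\<^sup>2 / (4 * sin \<alpha>) \<le> energy L g"
proof -
  define J k where "J = weight_integral \<alpha>" and "k = elastica_constant \<alpha>"
  have H1: "H1_with_deriv L \<theta> g"
    using adm by (simp add: admissible_def)
  have \<theta>_range: "\<theta> ` {0..L} \<subseteq> {0..2 * \<alpha>}"
    using admissible_range \<open>0 < L\<close> adm by auto
  have "\<theta> 0 = 0" "\<theta> L = 2 * \<alpha>"
    using adm by (simp_all add: admissible_def)
  then have weighted: "((\<lambda>s. elastica_weight \<alpha> (\<theta> s) * g s) has_integral J) {0..L}"
    unfolding J_def using \<open>0 < L\<close> \<theta>_range
    by (intro has_integral_elastica_weight_comp[OF _ H1_with_derivD(1,2)[OF H1]]) auto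
  have lhs: "((\<lambda>s. 2 * k * (elastica_weight \<alpha> (\<theta> s) * g s) - k\<^sup>2 * cos (\<theta> s - \<alpha>))
      has_integral 2 * k * J - k\<^sup>2 * (2 * sin \<alpha>)) {0..L}"
    using admissible_has_integral_cos_rotated \<open>0 < L\<close> adm
    by (intro has_integral_diff has_integral_mult_right weighted) auto
  have pointwise: "2 * k * (elastica_weight \<alpha> (\<theta> s) * g s) - k\<^sup>2 * cos (\<theta> s - \<alpha>) \<le> (g s)\<^sup>2"
    if "s \<in> {0..L}" for s
  proof -
    have "cos (\<theta> s - \<alpha>) = (elastica_weight \<alpha> (\<theta> s))\<^sup>2"
      using \<theta>_range that by (intro elastica_weight_squared[symmetric]) blast
    moreover have "0 \<le> (g s - k * elastica_weight \<alpha> (\<theta> s))\<^sup>2"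
      by simp
    ultimately show ?thesis
      by (simp add: power2_eq_square algebra_simps)
  qed
  have "2 * k * J - k\<^sup>2 * (2 * sin \<alpha>) \<le> (LINT s:{0..L}|lborel. (g s)\<^sup>2)"
    using lhs H1_with_derivD(3)[OF H1] pointwise by (rule has_integral_le)
  moreover have "2 * k * J - k\<^sup>2 * (2 * sin \<alpha>) = J\<^sup>2 / (2 * sin \<alpha>)"
    using sin_alpha_pos by (simp add: J_def k_def elastica_constant_def power2_eq_square field_simps)
  ultimately show ?thesis
    by (simp add: energy_def J_def)
qed

context
  fixes L :: real and \<theta> g :: "real \<Rightarrow> real"
  assumes L_pos: "0 < L" and \<theta>_cont: "continuous_on {0..L} \<theta>"
    and \<theta>_range: "\<theta> ` {0..L} \<subseteq> {0..2 * \<alpha>}" and \<theta>_0: "\<theta> 0 = 0" and \<theta>_L: "\<theta> L = 2 * \<alpha>"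
    and g_eq: "\<And>s. g s = elastica_constant \<alpha> * elastica_weight \<alpha> (\<theta> s)"
    and \<theta>_ode: "\<And>s. s \<in> {0<..<L} \<Longrightarrow> (\<theta> has_real_derivative g s) (at s)"
begin

lemma elastica_ode_g_continuous: "continuous_on {0..L} g"
  unfolding g_eq
  by (intro continuous_intros continuous_on_compose2[OF elastica_weight_continuous \<theta>_cont \<theta>_range])

lemma elastica_ode_indefinite_integral: "s \<in> {0..L} \<Longrightarrow> \<theta> s = \<theta> 0 + integral {0..s} g"
  by (rule eq_indefinite_integral_if_has_derivative[OF \<theta>_cont elastica_ode_g_continuous \<theta>_ode])

lemma elastica_ode_has_integral_weight:
  "((\<lambda>s. elastica_weight \<alpha> (\<theta> s) * g s) has_integral weight_integral \<alpha>) {0..L}"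
  using L_pos absolutely_integrable_continuous_real[OF elastica_ode_g_continuous]
    elastica_ode_indefinite_integral \<theta>_range \<theta>_0 \<theta>_L
  by (intro has_integral_elastica_weight_comp) auto

lemma elastica_ode_has_integral_energy:
  "((\<lambda>s. (g s)\<^sup>2) has_integral elastica_constant \<alpha> * weight_integral \<alpha>) {0..L}"
proof -
  have "(g s)\<^sup>2 = elastica_constant \<alpha> * (elastica_weight \<alpha> (\<theta> s) * g s)" for s
    by (simp add: g_eq power2_eq_square)
  then show ?thesis
    using has_integral_mult_right[OF elastica_ode_has_integral_weight] by simp
qed

lemma elastica_ode_has_integral_cos: "((\<lambda>s. cos (\<theta> s - \<alpha>)) has_integral 2 * sin \<alpha>) {0..L}"
proof -
  have "cos (\<theta> s - \<alpha>) = elastica_weight \<alpha> (\<theta> s) * g s / elastica_constant \<alpha>" if "s \<in> {0..L}" for s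
  proof -
    have "\<theta> s \<in> {0..2 * \<alpha>}"
      using \<theta>_range that by blast
    then show ?thesis
      using elastica_weight_squared elastica_constant_pos by (simp add: g_eq power2_eq_square)
  qed
  moreover have "weight_integral \<alpha> / elastica_constant \<alpha> = 2 * sin \<alpha>"
    using weight_integral_pos sin_alpha_pos
    by (simp add: elastica_constant_def)
  ultimately show ?thesis
    using has_integral_divide[OF elastica_ode_has_integral_weight, of "elastica_constant \<alpha>"]
    by (auto intro: has_integral_eq)
qed

lemma elastica_ode_weight_has_derivative:
  assumes s: "s \<in> {0<..<L}"
  shows "((\<lambda>s. elastica_weight \<alpha> (\<theta> s)) has_real_derivative
           - (elastica_constant \<alpha> / 2) * sin (\<theta> s - \<alpha>)) (at s)"
proof -
  have "\<theta> s \<in> {0..2 * \<alpha>}"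
    using \<theta>_range s by (auto simp: image_subset_iff)
  then have cos_pos: "0 < cos (\<theta> s - \<alpha>)"
    using cos_alpha_le_cos_diff cos_alpha_pos by fastforce
  have "((\<lambda>s. sqrt (cos (\<theta> s - \<alpha>))) has_real_derivative
      inverse (sqrt (cos (\<theta> s - \<alpha>))) / 2 * (- sin (\<theta> s - \<alpha>) * g s)) (at s)"
    by (rule DERIV_chain2[where f = sqrt and g = "\<lambda>s. cos (\<theta> s - \<alpha>)", OF DERIV_real_sqrt[OF cos_pos]])
      (auto intro!: derivative_eq_intros \<theta>_ode[OF s])
  moreover have "inverse (sqrt (cos (\<theta> s - \<alpha>))) / 2 * (- sin (\<theta> s - \<alpha>) * g s)
      = - (elastica_constant \<alpha> / 2) * sin (\<theta> s - \<alpha>)"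
    using cos_pos by (simp add: g_eq elastica_weight_def field_simps)
  ultimately show ?thesis
    unfolding elastica_weight_def by (rule DERIV_cong)
qed

lemma elastica_ode_has_integral_sin: "((\<lambda>s. sin (\<theta> s - \<alpha>)) has_integral 0) {0..L}"
proof -
  define k where "k = elastica_constant \<alpha>"
  have "((\<lambda>s. - (k / 2) * sin (\<theta> s - \<alpha>)) has_integral
      elastica_weight \<alpha> (\<theta> L) - elastica_weight \<alpha> (\<theta> 0)) {0..L}"
    using L_pos continuous_on_compose2[OF elastica_weight_continuous \<theta>_cont \<theta>_range]
      elastica_ode_weight_has_derivative
    by (intro fundamental_theorem_of_calculus_interior)
      (auto simp: k_def has_real_derivative_iff_has_vector_derivative)
  then have "((\<lambda>s. - (k / 2) * sin (\<theta> s - \<alpha>)) has_integral 0) {0..L}"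
    using \<theta>_0 \<theta>_L by (simp add: elastica_weight_def)
  from has_integral_mult_right[OF this, of "- (2 / k)"]
  have "((\<lambda>s. - (2 / k) * (- (k / 2) * sin (\<theta> s - \<alpha>))) has_integral 0) {0..L}"
    by simp
  moreover have "- (2 / k) * (- (k / 2) * x) = x" for x
    using elastica_constant_pos by (simp add: k_def)
  ultimately show ?thesis
    by simp
qed

lemma elastica_ode_admissible: "admissible \<alpha> L \<theta> g"
proof -
  have "H1_with_deriv L \<theta> g"
    using elastica_ode_g_continuous elastica_ode_indefinite_integral by (rule H1_with_derivI)
  moreover have "0 \<le> g s" if "s \<in> {0..L}" for s
    using elastica_weight_pos[of "\<theta> s"] elastica_constant_pos \<theta>_range that
    by (fastforce simp: g_eq)
  then have "AE s in lborel. s \<in> {0..L} \<longrightarrow> 0 \<le> g s"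
    by simp
  moreover have "integral {0..L} (\<lambda>s. cos (\<theta> s)) = sin (2 * \<alpha>)"
    "integral {0..L} (\<lambda>s. sin (\<theta> s)) = 1 - cos (2 * \<alpha>)"
    using closing_conditions_rotated[OF \<theta>_cont] elastica_ode_has_integral_cos elastica_ode_has_integral_sin
    by (auto dest: integral_unique)
  ultimately show ?thesis
    unfolding admissible_def using \<theta>_0 \<theta>_L \<theta>_cont
    by (simp add: set_integral_continuous_eq_integral continuous_intros)
qed

lemma elastica_ode_energy: "energy L g = (weight_integral \<alpha>)\<^sup>2 / (4 * sin \<alpha>)"
proof -
  have "(LINT s:{0..L}|lborel. (g s)\<^sup>2) = elastica_constant \<alpha> * weight_integral \<alpha>"
    using elastica_ode_g_continuous elastica_ode_has_integral_energy
    by (simp add: set_integral_continuous_eq_integral continuous_intros integral_unique)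
  then show ?thesis
    by (simp add: energy_def elastica_constant_def power2_eq_square)
qed

end

lemma elastica_minimizer_exists:
  obtains L \<theta> g where "0 < L" "admissible \<alpha> L \<theta> g"
    "energy L g = (weight_integral \<alpha>)\<^sup>2 / (4 * sin \<alpha>)"
proof -
  define f where "f \<phi> = elastica_constant \<alpha> * elastica_weight \<alpha> \<phi>" for \<phi>
  have "0 < 2 * \<alpha>"
    using \<alpha>_pos by simp
  moreover have "continuous_on {0..2 * \<alpha>} f"
    unfolding f_def by (intro continuous_intros elastica_weight_continuous)
  moreover have "0 < f \<phi>" if "\<phi> \<in> {0..2 * \<alpha>}" for \<phi>
    unfolding f_def using elastica_constant_pos elastica_weight_pos[OF that] by simp
  ultimately obtain L \<theta> where "0 < L" "continuous_on {0..L} \<theta>" "\<theta> ` {0..L} = {0..2 * \<alpha>}"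
    "\<theta> 0 = 0" "\<theta> L = 2 * \<alpha>" "\<And>s. s \<in> {0<..<L} \<Longrightarrow> (\<theta> has_real_derivative f (\<theta> s)) (at s)"
    using separable_ode_solution by metis
  then show ?thesis
    using elastica_ode_admissible elastica_ode_energy that[of L \<theta> "\<lambda>s. f (\<theta> s)"]
    by (simp add: f_def)
qed

end

theorem theorem2p1:
  fixes \<alpha> :: real
  assumes "0 < \<alpha>" and "\<alpha> < pi / 2"
  shows "\<exists>L \<theta> g. L > 0 \<and> admissible \<alpha> L \<theta> g \<and>
           (\<forall>L' \<theta>' g'. L' > 0 \<longrightarrow> admissible \<alpha> L' \<theta>' g' \<longrightarrow> energy L g \<le> energy L' g')"
proof -
  obtain L \<theta> g where "0 < L" "admissible \<alpha> L \<theta> g"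
    and minimal: "energy L g = (weight_integral \<alpha>)\<^sup>2 / (4 * sin \<alpha>)"
    using elastica_minimizer_exists[OF assms] .
  show ?thesis
  proof (intro exI conjI allI impI)
    show "0 < L" "admissible \<alpha> L \<theta> g" by fact+
    fix L' \<theta>' g' assume "0 < L'" "admissible \<alpha> L' \<theta>' g'"
    then show "energy L g \<le> energy L' g'"
      unfolding minimal by (rule energy_lower_bound[OF assms])
  qed
qed

end
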